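(* Assume (A3) and (A4), and let $\rho\in[0,\epsilon]$. Then for all $x\in R\mathbb{B}$, $$\mathrm{dist}(x,\mathcal{X}_\rho)\le\frac{1}{\sigma}[g(x)+\rho]_+ .$$
   Context: Let $g:\mathbb{R}^d\to\mathbb{R}$ be convex with subdifferential $\partial g(x)$. Let $R>0$ and $\mathbb{B}=\{x\in\mathbb{R}^d:\|x\|\le1\}$, with $\|\cdot\|$ the Euclidean norm. Set $\mathcal{X}=\{x:g(x)\le0\}$ and assume $\mathcal{X}\subseteq R\mathbb{B}$. For $\rho\ge0$ set $\mathcal{X}_\rho=\{x:g(x)\le-\rho\}$. Write $\mathrm{dist}(z,\mathcal{Y})=\min_{y\in\mathcal{Y}}\|z-y\|$ and $[a]_+=\max(a,0)$. Assumptions: (A3) there is $G_g>0$ with $\|s\|\le G_g$ for all $s\in\partial g(x)$ and all $x\in R\mathbb{B}$; (A4) there are $\sigma,\epsilon>0$ such that $\{x:g(x)=-\epsilon\}$ is nonempty and $\|s\|\ge\sigma$ for all $s\in\partial g(x)$ whenever $g(x)=-\epsilon$. *)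

theory Defs
  imports "HOL-Analysis.Analysis"
begin

definition subdiff :: "('a::real_inner \<Rightarrow> real) \<Rightarrow> 'a \<Rightarrow> 'a set" where
  "subdiff g x = {s. \<forall>y. g y \<ge> g x + inner s (y - x)}"

end

theory Submission
  imports Defs
begin

text \<open>
  Let q be the point of the sublevel set {g \<le> -\<epsilon>} nearest to x. Then q minimises g over the
  halfspace {w. \<langle>x - q, w - q\<rangle> \<ge> 0}, so some nonnegative multiple l(x - q) is a subgradient
  of g at q, where g q = -\<epsilon>. By (A4) we get \<sigma> \<le> l\<parallel>x - q\<parallel>, and the subgradient inequality at
  x gives g x + \<epsilon> \<ge> l\<parallel>x - q\<parallel>^2 \<ge> \<sigma>\<parallel>x - q\<parallel>. Moving from x towards q by the fraction
  (g x + \<rho>) / (g x + \<epsilon>) of the way reaches {g \<le> -\<rho>} by convexity.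
\<close>

lemma convex_sublevel:
  assumes "convex_on UNIV f"
  shows "convex {x. f x \<le> c}"
  unfolding convex_alt
proof (intro ballI allI impI)
  fix x y and t :: real
  assume xy: "x \<in> {x. f x \<le> c}" "y \<in> {x. f x \<le> c}" and t: "0 \<le> t \<and> t \<le> 1"
  have "f ((1 - t) *\<^sub>R x + t *\<^sub>R y) \<le> (1 - t) * f x + t * f y"
    using convex_onD[OF assms] t by blast
  also have "\<dots> \<le> (1 - t) * c + t * c"
    using xy t by (intro add_mono mult_left_mono) auto
  finally show "(1 - t) *\<^sub>R x + t *\<^sub>R y \<in> {x. f x \<le> c}"
    by (simp add: algebra_simps)
qed

lemma convex_slopes_across_hyperplane:
  fixes g :: "'a::real_inner \<Rightarrow> real"
  assumes convex: "convex_on UNIV g"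
    and hyperplane: "\<And>w. inner u (w - q) = 0 \<Longrightarrow> g q \<le> g w"
    and y1: "inner u (y1 - q) > 0" and y2: "inner u (y2 - q) < 0"
  shows "(- inner u (y2 - q)) * (g y1 - g q) + inner u (y1 - q) * (g y2 - g q) \<ge> 0"
proof -
  define a b where "a = inner u (y1 - q)" and "b = - inner u (y2 - q)"
  have ab: "a > 0" "b > 0" using y1 y2 by (auto simp: a_def b_def)
  define t where "t = a / (a + b)"
  have t: "0 \<le> t" "t \<le> 1" using ab by (auto simp: t_def)
  have "inner u ((1 - t) *\<^sub>R y1 + t *\<^sub>R y2 - q) = (1 - t) * a - t * b"
    by (simp add: a_def b_def algebra_simps inner_diff_right inner_add_right)
  also have "\<dots> = 0" using ab by (simp add: t_def field_simps)
  finally have "g q \<le> g ((1 - t) *\<^sub>R y1 + t *\<^sub>R y2)" by (rule hyperplane)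
  also have "\<dots> \<le> (1 - t) * g y1 + t * g y2" using convex_onD[OF convex t] by simp
  finally have "0 \<le> (1 - t) * (g y1 - g q) + t * (g y2 - g q)"
    by (simp add: algebra_simps)
  then have "0 \<le> (a + b) * ((1 - t) * (g y1 - g q) + t * (g y2 - g q))"
    using ab by simp
  also have "\<dots> = ((a + b) * (1 - t)) * (g y1 - g q) + ((a + b) * t) * (g y2 - g q)"
    by (simp add: algebra_simps)
  also have "(a + b) * (1 - t) = b" using ab by (simp add: t_def field_simps)
  also have "(a + b) * t = a" using ab by (simp add: t_def field_simps)
  finally show ?thesis by (simp add: a_def b_def)
qed

lemma subgradient_of_min_on_halfspace:
  fixes g :: "'a::real_inner \<Rightarrow> real"
  assumes convex: "convex_on UNIV g"
    and "u \<noteq> 0"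
    and min: "\<And>w. inner u (w - q) \<ge> 0 \<Longrightarrow> g q \<le> g w"
  shows "\<exists>l\<ge>0. l *\<^sub>R u \<in> subdiff g q"
proof -
  define slopes where "slopes = {(g y - g q) / inner u (y - q) | y. inner u (y - q) > 0}"
  define l where "l = Inf slopes"
  have slopes_nonneg: "z \<ge> 0" if "z \<in> slopes" for z
    using that min by (auto simp: slopes_def)
  have "inner u (q + u - q) > 0" using \<open>u \<noteq> 0\<close> by simp
  then have slopes_ne: "slopes \<noteq> {}" unfolding slopes_def by blast
  have bdd: "bdd_below slopes" using slopes_nonneg by (rule bdd_belowI)
  have l_nonneg: "l \<ge> 0" unfolding l_def using slopes_ne slopes_nonneg by (rule cInf_greatest)
  have "g q + l * inner u (y - q) \<le> g y" for y
  proof (cases "inner u (y - q)" "0::real" rule: linorder_cases)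
    case less
    have "(g y - g q) / inner u (y - q) \<le> l" unfolding l_def
    proof (rule cInf_greatest[OF slopes_ne])
      fix z assume "z \<in> slopes"
      then obtain y1 where z: "z = (g y1 - g q) / inner u (y1 - q)" and y1: "inner u (y1 - q) > 0"
        unfolding slopes_def by blast
      have "0 \<le> (- inner u (y - q)) * (g y1 - g q) + inner u (y1 - q) * (g y - g q)"
        using convex_slopes_across_hyperplane[OF convex _ y1 less] min by simp
      then have "z * inner u (y - q) \<le> g y - g q"
        using y1 by (simp add: z field_simps)
      then show "(g y - g q) / inner u (y - q) \<le> z"
        using less by (simp add: neg_divide_le_eq)
    qed
    then show ?thesis using less by (simp add: neg_divide_le_eq)
  next
    case equal
    then show ?thesis using min[of y] by simp
  next
    case greater
    have "l \<le> (g y - g q) / inner u (y - q)"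
      unfolding l_def using greater by (intro cInf_lower[OF _ bdd]) (auto simp: slopes_def)
    then show ?thesis using greater by (simp add: pos_le_divide_eq)
  qed
  then have "l *\<^sub>R u \<in> subdiff g q" by (simp add: subdiff_def)
  with l_nonneg show ?thesis by blast
qed

lemma nearest_point_of_sublevel_halfspace:
  fixes g :: "'a::euclidean_space \<Rightarrow> real"
  assumes convex: "convex_on UNIV g"
    and x: "c < g x" and q: "g q \<le> c"
    and nearest: "\<And>y. g y \<le> c \<Longrightarrow> dist x q \<le> dist x y"
    and w: "inner (x - q) (w - q) \<ge> 0"
  shows "c \<le> g w"
  \<comment> \<open>A point of the open set {g < c} in the halfspace could be pushed further along x - q
    without leaving the sublevel set, contradicting the obtuse-angle property of the nearest point.\<close>
proof (rule ccontr)
  let ?L = "{y. g y \<le> c}"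
  assume "\<not> c \<le> g w"
  have cont: "continuous_on UNIV g" using convex_on_continuous[OF open_UNIV convex] .
  have "open {y. g y < c}" using open_Collect_less[OF cont continuous_on_const] .
  moreover have "w \<in> {y. g y < c}" using \<open>\<not> c \<le> g w\<close> by simp
  ultimately obtain e where e: "e > 0" "ball w e \<subseteq> {y. g y < c}"
    using open_contains_ball by blast
  define u where "u = x - q"
  have "u \<noteq> 0" using x q by (auto simp: u_def)
  define d where "d = e / (2 * norm u)"
  have d: "d > 0" "d * norm u < e" using e \<open>u \<noteq> 0\<close> by (auto simp: d_def)
  have "dist w (w + d *\<^sub>R u) < e" using d by (simp add: dist_norm)
  then have "w + d *\<^sub>R u \<in> ?L" using e by auto
  moreover have "closed ?L" using closed_Collect_le[OF cont continuous_on_const] .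
  ultimately have "inner u (w + d *\<^sub>R u - q) \<le> 0"
    unfolding u_def using q nearest
    by (intro any_closest_point_dot[OF convex_sublevel[OF convex]]) auto
  moreover have "inner u (w + d *\<^sub>R u - q) = inner u (w - q) + d * inner u u"
    by (simp add: algebra_simps inner_diff_right inner_add_right)
  moreover have "d * inner u u > 0" using \<open>u \<noteq> 0\<close> d by simp
  ultimately show False using w by (simp add: u_def)
qed

lemma level_set_point_within_distance:
  fixes g :: "'a::euclidean_space \<Rightarrow> real"
  assumes convex: "convex_on UNIV g"
    and x: "c < g x" and "g p \<le> c"
    and sharp: "\<And>y s. g y = c \<Longrightarrow> s \<in> subdiff g y \<Longrightarrow> \<sigma> \<le> norm s"
  shows "\<exists>q. g q = c \<and> \<sigma> * dist x q \<le> g x - c"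
proof -
  let ?L = "{y. g y \<le> c}"
  have "closed ?L"
    using closed_Collect_le[OF convex_on_continuous[OF open_UNIV convex] continuous_on_const] .
  moreover have "?L \<noteq> {}" using \<open>g p \<le> c\<close> by blast
  ultimately obtain q where q: "g q \<le> c" and nearest: "\<And>y. g y \<le> c \<Longrightarrow> dist x q \<le> dist x y"
    using distance_attains_inf[of ?L x] by auto
  define u where "u = x - q"
  have "u \<noteq> 0" using x q by (auto simp: u_def)
  have halfspace: "inner u (w - q) \<ge> 0 \<Longrightarrow> c \<le> g w" for w
    unfolding u_def using nearest_point_of_sublevel_halfspace[OF convex x q nearest] .
  have gq: "g q = c" using q halfspace[of q] by simp
  obtain l where "l \<ge> 0" and sub: "l *\<^sub>R u \<in> subdiff g q"
    using subgradient_of_min_on_halfspace[OF convex \<open>u \<noteq> 0\<close>, of q] halfspace gq by auto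
  have "\<sigma> \<le> l * norm u" using sharp[OF gq sub] \<open>l \<ge> 0\<close> by simp
  then have "\<sigma> * norm u \<le> l * (norm u * norm u)"
    using mult_right_mono[of \<sigma> "l * norm u" "norm u"] by (simp add: mult.assoc)
  also have "\<dots> = inner (l *\<^sub>R u) (x - q)"
    by (simp add: u_def power2_eq_square[symmetric] dot_square_norm)
  also have "\<dots> \<le> g x - c" using sub gq by (auto simp: subdiff_def dest: spec[of _ x])
  finally show ?thesis using gq by (auto simp: u_def dist_norm)
qed

lemma infdist_sublevel_le_interpolation:
  fixes g :: "'a::real_normed_vector \<Rightarrow> real"
  assumes convex: "convex_on UNIV g"
    and "g q \<le> a" "a \<le> b" "b < g x"
  shows "infdist x {y. g y \<le> b} \<le> (g x - b) / (g x - a) * dist x q"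
proof -
  define t where "t = (g x - b) / (g x - a)"
  have t: "0 \<le> t" "t \<le> 1" using assms by (auto simp: t_def)
  define y where "y = (1 - t) *\<^sub>R x + t *\<^sub>R q"
  have "g y \<le> (1 - t) * g x + t * g q" unfolding y_def using convex_onD[OF convex t] by simp
  also have "\<dots> \<le> g x - t * (g x - a)"
    using mult_left_mono[OF \<open>g q \<le> a\<close> t(1)] by (simp add: algebra_simps)
  also have "\<dots> = b" using assms by (simp add: t_def)
  finally have "y \<in> {y. g y \<le> b}" by simp
  moreover have "dist x y = t * dist x q"
  proof -
    have "x - y = t *\<^sub>R (x - q)" by (simp add: y_def algebra_simps)
    then show ?thesis using t by (simp add: dist_norm)
  qed
  ultimately show ?thesis unfolding t_def by (metis infdist_le)
qed

theorem lemma1: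
  fixes g :: "'a::euclidean_space \<Rightarrow> real"
    and R G\<^sub>g \<sigma> \<epsilon> \<rho> :: real
  assumes convex: "convex_on UNIV g"
    and R_pos: "R > 0"
    and X_sub: "{x. g x \<le> 0} \<subseteq> cball 0 R"
    and A3: "G\<^sub>g > 0" "\<forall>x\<in>cball 0 R. \<forall>s\<in>subdiff g x. norm s \<le> G\<^sub>g"
    and A4: "\<sigma> > 0" "\<epsilon> > 0" "{x. g x = - \<epsilon>} \<noteq> {}"
      "\<forall>x. g x = - \<epsilon> \<longrightarrow> (\<forall>s\<in>subdiff g x. norm s \<ge> \<sigma>)"
    and rho: "0 \<le> \<rho>" "\<rho> \<le> \<epsilon>"
  shows "\<forall>x\<in>cball 0 R. infdist x {y. g y \<le> - \<rho>} \<le> (1 / \<sigma>) * max (g x + \<rho>) 0"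
proof
  \<comment> \<open>The bound holds for every x.\<close>
  fix x :: 'a
  show "infdist x {y. g y \<le> - \<rho>} \<le> (1 / \<sigma>) * max (g x + \<rho>) 0"
  proof (cases "g x \<le> - \<rho>")
    case True
    then show ?thesis using A4(1) by simp
  next
    case False
    then have x: "- \<epsilon> < g x" using rho by simp
    obtain p where "g p = - \<epsilon>" using A4(3) by blast
    then obtain q where q: "g q = - \<epsilon>" "\<sigma> * dist x q \<le> g x + \<epsilon>"
      using level_set_point_within_distance[OF convex x, of p \<sigma>] A4(4) by auto
    have "infdist x {y. g y \<le> - \<rho>} \<le> (g x + \<rho>) / (g x + \<epsilon>) * dist x q"
      using infdist_sublevel_le_interpolation[OF convex, of q "- \<epsilon>" "- \<rho>" x] q(1) rho False
      by simp
    also have "\<dots> \<le> (g x + \<rho>) / (g x + \<epsilon>) * ((g x + \<epsilon>) / \<sigma>)"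
      using q(2) A4(1) False x
      by (intro mult_left_mono) (auto simp: pos_le_divide_eq mult.commute)
    also have "\<dots> = (1 / \<sigma>) * max (g x + \<rho>) 0"
      using False x by simp
    finally show ?thesis .
  qed
qed

end
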